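(* Let $a=a_1+a_2$ be a generalized core-EP decomposition of $a$ (i.e. $a_1^*a_2=a_2a_1=0$, $a_1$ is core invertible and $a_2\in\mathcal{A}^{qnil}$), and let $p=a_1a_1^{\mathrm{core}}$. Then $a=\begin{pmatrix} t&s\\ 0&n\end{pmatrix}_p$, where $t\in (p\mathcal{A}p)^{-1}$, $n\in (p^{\pi}\mathcal{A}p^{\pi})^{qnil}$.
   Context: $\mathcal{A}$ is a complex Banach *-algebra with identity; $\mathcal{A}^{qnil}$ is the set of quasinilpotent elements. An element $a$ is core invertible if there is $x$ with $a=axa$, $x\mathcal{A}=a\mathcal{A}$, $\mathcal{A}x=\mathcal{A}a^*$; such $x$ is unique and denoted $a^{\mathrm{core}}$. For a projection $p$ ($p=p^2=p^*$), $p^\pi=1-p$, and any $x\in\mathcal{A}$ is written as $x=\begin{pmatrix} pxp&px(1-p)\\ (1-p)xp&(1-p)x(1-p)\end{pmatrix}_p$. *)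

theory Defs
  imports "HOL-Analysis.Analysis"
begin

text \<open>HOL-Analysis only provides real
  normed algebras, so the complex scalar multiplication and the involution are
  added as class parameters with the usual axioms.\<close>

class banach_star_algebra = banach + real_normed_algebra_1 +
  fixes cscale :: "complex \<Rightarrow> 'a \<Rightarrow> 'a"
    and adj :: "'a \<Rightarrow> 'a"
  assumes cscale_of_real: "cscale (complex_of_real r) x = scaleR r x"
    and cscale_add_right: "cscale c (x + y) = cscale c x + cscale c y"
    and cscale_add_left: "cscale (c + d) x = cscale c x + cscale d x"
    and cscale_cscale: "cscale c (cscale d x) = cscale (c * d) x"
    and cscale_one: "cscale 1 x = x"
    and norm_cscale: "norm (cscale c x) = cmod c * norm x"
    and cscale_mult_left: "cscale c (x * y) = cscale c x * y"
    and cscale_mult_right: "cscale c (x * y) = x * cscale c y"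
    and adj_add: "adj (x + y) = adj x + adj y"
    and adj_cscale: "adj (cscale c x) = cscale (cnj c) (adj x)"
    and adj_mult: "adj (x * y) = adj y * adj x"
    and adj_adj: "adj (adj x) = x"

definition is_core_inverse :: "'a::banach_star_algebra \<Rightarrow> 'a \<Rightarrow> bool" where
  "is_core_inverse a x \<longleftrightarrow> a = a * x * a
     \<and> range (\<lambda>z. x * z) = range (\<lambda>z. a * z)
     \<and> range (\<lambda>z. z * x) = range (\<lambda>z. z * adj a)"

definition core_invertible :: "'a::banach_star_algebra \<Rightarrow> bool" where
  "core_invertible a \<longleftrightarrow> (\<exists>x. is_core_inverse a x)"

definition core_inverse :: "'a::banach_star_algebra \<Rightarrow> 'a" where
  "core_inverse a = (THE x. is_core_inverse a x)"

text \<open>Invertibility in the corner algebra e A e (unit e); for e = 1 this is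
  ordinary invertibility in A.\<close>
definition corner_invertible :: "'a::banach_star_algebra \<Rightarrow> 'a \<Rightarrow> bool" where
  "corner_invertible e t \<longleftrightarrow> t = e * t * e \<and>
     (\<exists>y. y = e * y * e \<and> t * y = e \<and> y * t = e)"

text \<open>Quasinilpotent in the corner algebra e A e: an element of e A e whose spectrum
  (relative to e A e) is {0}, i.e. \<lambda> e - n is invertible in e A e for all \<lambda> \<noteq> 0.\<close>
definition corner_qnil :: "'a::banach_star_algebra \<Rightarrow> 'a \<Rightarrow> bool" where
  "corner_qnil e n \<longleftrightarrow> n = e * n * e \<and>
     (\<forall>l::complex. l \<noteq> 0 \<longrightarrow> corner_invertible e (cscale l e - n))"

definition qnil :: "'a::banach_star_algebra \<Rightarrow> bool" where
  "qnil a \<longleftrightarrow> (\<forall>l::complex. l \<noteq> 0 \<longrightarrow> corner_invertible 1 (cscale l 1 - a))"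

end

theory Submission
  imports Defs
begin

text \<open>Let x be the core inverse of a1 and p = a1 x. Then p a1 = a1, and writing
  p = p* = x* a1* the hypothesis a1* a2 = 0 gives p a2 = 0, while a2 a1 = 0 gives a2 p = 0.
  Hence the lower left block of a vanishes, the upper left block is a1 p, which has the
  inverse x in pAp, and the lower right block is a2 itself. Since l - a2 commutes with p,
  so does its inverse, which therefore compresses to an inverse of l (1 - p) - a2 in the
  corner (1 - p) A (1 - p).\<close>

lemma is_core_inverseD:
  fixes a x :: "'a::banach_star_algebra"
  assumes "is_core_inverse a x"
  shows "a * x * a = a" and "x * a * x = x" and "adj (a * x) = a * x"
    and "a * x * x = x" and "x * a * a = a"
proof -
  have axa: "a * x * a = a"
    and ranges: "range ((*) x) = range ((*) a)" "range (\<lambda>z. z * x) = range (\<lambda>z. z * adj a)"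
    using assms unfolding is_core_inverse_def by auto
  obtain u where u: "x = a * u" using ranges(1) by (metis mult.right_neutral rangeE rangeI)
  obtain r where r: "a = x * r" using ranges(1) by (metis mult.right_neutral rangeE rangeI)
  obtain v where v: "x = v * adj a" using ranges(2) by (metis mult.left_neutral rangeE rangeI)
  have adj_axa: "adj a * adj x * adj a = adj a" using axa by (metis adj_mult mult.assoc)
  \<comment> \<open>x = v a* and a* = a* x* a* give x = x (a x)*, so a x = (a x)(a x)* is self-adjoint.\<close>
  have "a * x = a * x * adj (a * x)"
    using v adj_axa by (metis adj_mult mult.assoc)
  then show sa: "adj (a * x) = a * x" by (metis adj_adj adj_mult)
  have "adj a * (a * x) = adj a" using adj_axa sa by (metis adj_mult mult.assoc)
  then show xax: "x * a * x = x" using v by (metis mult.assoc)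
  show "a * x * a = a" by (fact axa)
  show "a * x * x = x" using u axa by (metis mult.assoc)
  show "x * a * a = a" using r xax by (metis mult.assoc)
qed

lemma is_core_inverse_unique:
  fixes a x y :: "'a::banach_star_algebra"
  assumes x: "is_core_inverse a x" and y: "is_core_inverse a y"
  shows "x = y"
proof -
  note fx = is_core_inverseD[OF x] and fy = is_core_inverseD[OF y]
  have "a * x = adj (a * y * (a * x))" using fx(3,4) fy(1) by (metis mult.assoc)
  also have "\<dots> = a * y" using fx(3) fy(3,4) fx(1) by (metis adj_mult mult.assoc)
  finally have ax: "a * x = a * y" .
  have "x * a = x * a * (y * a)" using fy(1) by (metis mult.assoc)
  also have "\<dots> = x * a * a * y * y * a" using fy(4) by (metis mult.assoc)
  also have "\<dots> = y * a" using fx(5) fy(4) by metis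
  finally have xa: "x * a = y * a" .
  have "x = x * a * x" using fx(2) by simp
  also have "\<dots> = y * a * y" using xa ax by (metis mult.assoc)
  also have "\<dots> = y" using fy(2) by simp
  finally show ?thesis .
qed

lemma core_inverse_eqI: "is_core_inverse a x \<Longrightarrow> core_inverse a = x"
  unfolding core_inverse_def using is_core_inverse_unique by blast

lemma core_projection_annihilates:
  fixes a x b :: "'a::banach_star_algebra"
  assumes "is_core_inverse a x" and "adj a * b = 0"
  shows "a * x * b = 0"
proof -
  have "a * x = adj x * adj a" using is_core_inverseD(3)[OF assms(1)] by (metis adj_mult)
  then show ?thesis using assms(2) by (simp add: mult.assoc)
qed

lemma core_inverse_corner_invertible:
  fixes a x :: "'a::banach_star_algebra"
  assumes "is_core_inverse a x"
  shows "corner_invertible (a * x) (a * (a * x))"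
  unfolding corner_invertible_def
proof (intro conjI exI)
  note f = is_core_inverseD[OF assms]
  show "a * (a * x) = a * x * (a * (a * x)) * (a * x)" using f(1,2) by (metis mult.assoc)
  show "x = a * x * x * (a * x)" using f(2,4) by (metis mult.assoc)
  show "a * (a * x) * x = a * x" using f(4) by (metis mult.assoc)
  show "x * (a * (a * x)) = a * x" using f(5) by (metis mult.assoc)
qed

lemma inverse_commute:
  fixes b y e :: "'a::monoid_mult"
  assumes "b * y = 1" and "y * b = 1" and "e * b = b * e"
  shows "e * y = y * e"
proof -
  have "e * y = y * (b * e) * y" using assms(2) by (simp flip: mult.assoc)
  also have "\<dots> = y * e * (b * y)" using assms(3) by (metis mult.assoc)
  also have "\<dots> = y * e" using assms(1) by simp
  finally show ?thesis .
qed

lemma corner_invertible_mult_idem: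
  fixes b e :: "'a::banach_star_algebra"
  assumes "corner_invertible 1 b" and "e * e = e" and "e * b = b * e"
  shows "corner_invertible e (b * e)"
proof -
  obtain y where y: "b * y = 1" "y * b = 1" using assms(1) unfolding corner_invertible_def by auto
  have ey: "e * y = y * e" using inverse_commute[OF y assms(3)] .
  show ?thesis
    unfolding corner_invertible_def
  proof (intro conjI exI)
    show "b * e = e * (b * e) * e" using assms(2,3) by (metis mult.assoc)
    show "y * e = e * (y * e) * e" using assms(2) ey by (metis mult.assoc)
    show "b * e * (y * e) = e" using y(1) assms(2) ey by (metis mult.assoc mult_1_left)
    show "y * e * (b * e) = e" using y(2) assms(2,3) by (metis mult.assoc mult_1_left)
  qed
qed

lemma qnil_imp_corner_qnil:
  fixes n e :: "'a::banach_star_algebra"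
  assumes "qnil n" and "e * e = e" and "e * n = n" and "n * e = n"
  shows "corner_qnil e n"
  unfolding corner_qnil_def
proof (intro conjI allI impI)
  show "n = e * n * e" using assms(3,4) by simp
  fix l :: complex
  assume "l \<noteq> 0"
  then have inv: "corner_invertible 1 (cscale l 1 - n)" using assms(1) unfolding qnil_def by blast
  have scal: "cscale l 1 * e = cscale l e" "e * cscale l 1 = cscale l e"
    by (metis cscale_mult_left mult_1_left, metis cscale_mult_right mult_1_right)
  have "e * (cscale l 1 - n) = (cscale l 1 - n) * e"
    using scal assms(3,4) by (simp add: algebra_simps)
  from corner_invertible_mult_idem[OF inv assms(2) this]
  show "corner_invertible e (cscale l e - n)"
    using scal assms(4) by (simp add: algebra_simps)
qed

lemma block_decomposition:
  fixes p a1 a2 :: "'a::ring_1"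
  assumes "p * a1 = a1" and "p * a2 = 0" and "a2 * p = 0"
  shows "p * (a1 + a2) * p = a1 * p" and "(1 - p) * (a1 + a2) * p = 0"
    and "(1 - p) * (a1 + a2) * (1 - p) = a2"
proof -
  have "p * a1 * p = a1 * p" using assms(1) by simp
  then show "p * (a1 + a2) * p = a1 * p" "(1 - p) * (a1 + a2) * p = 0"
    "(1 - p) * (a1 + a2) * (1 - p) = a2"
    using assms by (simp_all add: algebra_simps)
qed

theorem lemma4p1:
  fixes a a1 a2 :: "'a::banach_star_algebra"
  assumes "a = a1 + a2"
    and "adj a1 * a2 = 0"
    and "a2 * a1 = 0"
    and "core_invertible a1"
    and "qnil a2"
  defines "p \<equiv> a1 * core_inverse a1"
  shows "p * p = p \<and> adj p = p \<and>
    (\<exists>t s n. p * a * p = t \<and> p * a * (1 - p) = s \<and> (1 - p) * a * p = 0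
       \<and> (1 - p) * a * (1 - p) = n
       \<and> corner_invertible p t \<and> corner_qnil (1 - p) n)"
proof -
  obtain x where x: "is_core_inverse a1 x"
    using assms(4) unfolding core_invertible_def by blast
  have p: "p = a1 * x" using core_inverse_eqI[OF x] p_def by simp
  note f = is_core_inverseD[OF x]
  have pp: "p * p = p" using f(1) p by (metis mult.assoc)
  have pa1: "p * a1 = a1" using f(1) p by simp
  have adj_p: "adj p = p" using f(3) p by simp
  have pa2: "p * a2 = 0" using core_projection_annihilates[OF x assms(2)] p by simp
  have a2p: "a2 * p = 0" using assms(3) p by (metis mult.assoc mult_zero_left)
  note blocks = block_decomposition[OF pa1 pa2 a2p, folded assms(1)]
  have "corner_invertible p (a1 * p)"
    using core_inverse_corner_invertible[OF x] p by simp
  moreover have "corner_qnil (1 - p) a2"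
    using assms(5) pp pa2 a2p by (intro qnil_imp_corner_qnil) (simp_all add: algebra_simps)
  ultimately show ?thesis using pp adj_p blocks by blast
qed

end
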